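(* For every constant $A\in\mathbb{N}$ there is a family $(\mathcal{V}_n)_{n\in\mathbb{N}}$ of VASS, each with two $\mathbb{N}$-counters and some number of $\mathbb{Z}$-counters, such that the size of $\mathcal{V}_n$ is polynomial in $n$ and $\mathcal{V}_n$ computes the set $\{(A^{2^n},\,B,\,B\cdot A^{2^n}) : B\in\mathbb{N}\}\subseteq\mathbb{Z}^3$.
   Context: A VASS with $d$ $\mathbb{N}$-counters and $k$ $\mathbb{Z}$-counters consists of a finite set $Q$ of states and a finite set $T\subseteq Q\times\mathbb{Z}^{d+k}\times Q$ of transitions. A configuration is $p(\mathbf{u})$ with $p\in Q$, $\mathbf{u}\in\mathbb{N}^d\times\mathbb{Z}^k$. A transition $(p,\mathbf{v},q)$ can be fired from $p(\mathbf{u})$, leading to $q(\mathbf{u}+\mathbf{v})$, provided the first $d$ coordinates of $\mathbf{u}+\mathbf{v}$ are nonnegative. Size is measured with numbers in unary: $|Q|+\sum_{(p,\mathbf{v},q)\in T}\|\mathbf{v}\|_1$. For $\mathbf{u}\in\mathbb{Z}^m$, write $\mathbf{u}\oplus 0^{j}$ for $\mathbf{u}$ padded with $j$ zeros. Such a VASS computes a set $S\subseteq\mathbb{Z}^m$ if there are distinguished states $q_I,q_F$ such that $S$ equals the set of $\mathbf{v}$ for which there is a run from $q_I(0^{d+k})$ to $q_F(\mathbf{v}\oplus 0^{d+k-m})$ (the vector $\mathbf{v}$ may occupy both $\mathbb{N}$- and $\mathbb{Z}$-counters). *)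

theory Defs
  imports Main
begin

text \<open>A VASS with nd natural-number counters (the first nd coordinates) and nz integer
counters. States are natural numbers; a transition is (p, v, q) with v an integer vector
(list) of length nd + nz.\<close>

record vass =
  nd :: nat
  nz :: nat
  states :: "nat set"
  trans :: "(nat \<times> int list \<times> nat) set"

definition wf_vass :: "vass \<Rightarrow> bool" where
  "wf_vass V \<longleftrightarrow> finite (states V) \<and> finite (trans V) \<and>
     (\<forall>(p, v, q) \<in> trans V. p \<in> states V \<and> q \<in> states V \<and> length v = nd V + nz V)"

definition vass_step :: "vass \<Rightarrow> nat \<times> int list \<Rightarrow> nat \<times> int list \<Rightarrow> bool" where
  "vass_step V c c' \<longleftrightarrow>
     (\<exists>v. (fst c, v, fst c') \<in> trans V \<and> length (snd c) = length v \<and>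
          snd c' = map2 (+) (snd c) v \<and> (\<forall>i < nd V. snd c' ! i \<ge> 0))"

definition vass_reach :: "vass \<Rightarrow> nat \<times> int list \<Rightarrow> nat \<times> int list \<Rightarrow> bool" where
  "vass_reach V = (vass_step V)\<^sup>*\<^sup>*"

text \<open>Size with numbers in unary: number of states plus sum of 1-norms of transition vectors.\<close>
definition vass_size :: "vass \<Rightarrow> nat" where
  "vass_size V = card (states V) + (\<Sum>t \<in> trans V. sum_list (map (\<lambda>x. nat \<bar>x\<bar>) (fst (snd t))))"

definition vass_computes :: "vass \<Rightarrow> nat \<Rightarrow> int list set \<Rightarrow> bool" where
  "vass_computes V m S \<longleftrightarrow> m \<le> nd V + nz V \<and>
     (\<exists>qI \<in> states V. \<exists>qF \<in> states V.
        S = {v. length v = m \<and>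
                vass_reach V (qI, replicate (nd V + nz V) 0)
                             (qF, v @ replicate (nd V + nz V - m) 0)})"

end

theory Submission
  imports Defs
begin

(* Level k of the VASS receives a = A^(2^k) in counter 0 and a pair (b, b * a) in counters of
   its own, and hands (a^2, b', b' * a^2) on to level k + 1, where b = (1 + a) * (1 + b');
   level n finally moves its pair into counters 1 and 2.
   It spends b in rounds of four kinds.  A round moves units from counter 0 to counter 1, adding
   each one to a target counter of its kind and subtracting it from the copy of b * a, and then
   moves them back.  Since counter 0 is an N-counter holding a, a round moves at most a units,
   while b rounds have to remove all of b * a: the zero test on the level's counters at the end
   of the run forces every round to be full.  Checks between the kinds then pin down their
   numbers -- one round of kind 1, a of kind 2, b' of kind 3 and b' * a of kind 4 -- and make the
   squaring loop add exactly a^2 - a to counter 0. *)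

definition sparse :: "(nat \<times> int) list \<Rightarrow> nat \<Rightarrow> int" where
  "sparse l i = sum_list (map (\<lambda>(j, c). if j = i then c else 0) l)"

lemma sparse_simps [simp]:
  "sparse [] i = 0"
  "sparse ((j, c) # l) i = (if j = i then c else 0) + sparse l i"
  "sparse (l @ l') i = sparse l i + sparse l' i"
  by (simp_all add: sparse_def)

(* Counters 0 and 1 are the two N-counters and counters 0, 1, 2 carry the output.  Level k owns
   the six Z-counters from ctr_b k to ctr_t k and passes its result on in ctr_b (Suc k) and
   ctr_w (Suc k). *)
definition ctr_b :: "nat \<Rightarrow> nat" where "ctr_b k = 3 + 6 * k"
definition ctr_w :: "nat \<Rightarrow> nat" where "ctr_w k = 4 + 6 * k"
definition ctr_y0 :: "nat \<Rightarrow> nat" where "ctr_y0 k = 5 + 6 * k"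
definition ctr_y1 :: "nat \<Rightarrow> nat" where "ctr_y1 k = 6 + 6 * k"
definition ctr_y2 :: "nat \<Rightarrow> nat" where "ctr_y2 k = 7 + 6 * k"
definition ctr_t :: "nat \<Rightarrow> nat" where "ctr_t k = 8 + 6 * k"
definition dim :: "nat \<Rightarrow> nat" where "dim n = 9 + 6 * n"

lemmas ctr_defs = ctr_b_def ctr_w_def ctr_y0_def ctr_y1_def ctr_y2_def ctr_t_def

definition level_state :: "nat \<Rightarrow> nat \<Rightarrow> nat" where "level_state k j = 1 + 8 * k + j"

lemma level_state_eq_iff: "level_state k j = level_state k' j' \<longleftrightarrow> 8 * k + j = 8 * k' + j'"
  by (auto simp: level_state_def)

definition transfer :: "nat \<Rightarrow> (nat \<times> int) list" where
  "transfer k = [(0, -1), (1, 1), (ctr_w k, -1), (ctr_t k, 1)]"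

definition fill_ctr :: "nat \<Rightarrow> nat \<Rightarrow> nat" where
  "fill_ctr k j = (if j = 1 then ctr_y0 k else if j = 2 then ctr_y1 k
     else if j = 3 then ctr_y2 k else ctr_w (Suc k))"

definition round_start :: "nat \<Rightarrow> nat \<Rightarrow> (nat \<times> int) list" where
  "round_start k j = (ctr_b k, -1) #
     (if j = 2 then [(ctr_y0 k, -1), (ctr_y1 k, -1)] else if j = 3 then [(ctr_b (Suc k), 1)]
      else if j = 4 then [(ctr_y2 k, -1)] else [])"

(* In state j = 1..4 a round of kind j transfers units from counter 0 to counter 1, state 5
   transfers them back, state 6 starts a round of kind 2, 3 or 4, and state 7 is the squaring
   loop. *)
definition level_trans :: "nat \<Rightarrow> (nat \<times> (nat \<times> int) list \<times> nat) list" where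
  "level_trans k =
     (level_state k 0, round_start k 1, level_state k 1) #
     map (\<lambda>j. (level_state k 6, round_start k j, level_state k j)) [2, 3, 4] @
     map (\<lambda>j. (level_state k j, transfer k @ [(fill_ctr k j, 1)], level_state k j)) [1, 2, 3, 4] @
     map (\<lambda>j. (level_state k j, [], level_state k 5)) [1, 2, 3, 4] @
     [(level_state k 5, [(0, 1), (1, -1), (ctr_t k, -1)], level_state k 5),
      (level_state k 5, [], level_state k 6),
      (level_state k 6, [], level_state k 7),
      (level_state k 7, [(0, 1), (ctr_y1 k, -1)], level_state k 7),
      (level_state k 7, [], level_state (Suc k) 0)]"

definition pow_trans :: "nat \<Rightarrow> nat \<Rightarrow> (nat \<times> (nat \<times> int) list \<times> nat) list" where
  "pow_trans A n =
     [(0, [(ctr_b 0, 1), (ctr_w 0, int A)], 0),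
      (0, [(0, int A)], level_state 0 0),
      (level_state n 0, [(1, 1), (ctr_b n, -1)], level_state n 0),
      (level_state n 0, [(2, 1), (ctr_w n, -1)], level_state n 0)]
     @ concat (map level_trans [0..<n])"

definition vass_trans_of :: "nat \<Rightarrow> nat \<times> (nat \<times> int) list \<times> nat \<Rightarrow> nat \<times> int list \<times> nat" where
  "vass_trans_of d = (\<lambda>(p, l, q). (p, map (sparse l) [0..<d], q))"

definition pow_vass :: "nat \<Rightarrow> nat \<Rightarrow> vass" where
  "pow_vass A n = \<lparr>nd = 2, nz = 7 + 6 * n, states = {0..<8 * n + 2},
     trans = vass_trans_of (dim n) ` set (pow_trans A n)\<rparr>"

lemma level_trans_memI:
  "(level_state k 0, round_start k 1, level_state k 1) \<in> set (level_trans k)"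
  "j \<in> {2, 3, 4} \<Longrightarrow> (level_state k 6, round_start k j, level_state k j) \<in> set (level_trans k)"
  "j \<in> {1, 2, 3, 4} \<Longrightarrow>
    (level_state k j, transfer k @ [(fill_ctr k j, 1)], level_state k j) \<in> set (level_trans k)"
  "j \<in> {1, 2, 3, 4} \<Longrightarrow> (level_state k j, [], level_state k 5) \<in> set (level_trans k)"
  "(level_state k 5, [(0, 1), (1, -1), (ctr_t k, -1)], level_state k 5) \<in> set (level_trans k)"
  "(level_state k 5, [], level_state k 6) \<in> set (level_trans k)"
  "(level_state k 6, [], level_state k 7) \<in> set (level_trans k)"
  "(level_state k 7, [(0, 1), (ctr_y1 k, -1)], level_state k 7) \<in> set (level_trans k)"
  "(level_state k 7, [], level_state (Suc k) 0) \<in> set (level_trans k)"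
  by (auto simp: level_trans_def)

lemma level_transE:
  assumes "(p, l, q) \<in> set (level_trans k)"
  obtains (entry) "p = level_state k 0" "q = level_state k 1" "l = round_start k 1"
    | (round) j where "j \<in> {2, 3, 4}" "p = level_state k 6" "q = level_state k j"
        "l = round_start k j"
    | (fill) j where "j \<in> {1, 2, 3, 4}" "p = level_state k j" "q = level_state k j"
        "l = transfer k @ [(fill_ctr k j, 1)]"
    | (fill_done) j where "j \<in> {1, 2, 3, 4}" "p = level_state k j" "q = level_state k 5" "l = []"
    | (drain) "p = level_state k 5" "q = level_state k 5" "l = [(0, 1), (1, -1), (ctr_t k, -1)]"
    | (drain_done) "p = level_state k 5" "q = level_state k 6" "l = []"
    | (square_start) "p = level_state k 6" "q = level_state k 7" "l = []"
    | (square) "p = level_state k 7" "q = level_state k 7" "l = [(0, 1), (ctr_y1 k, -1)]"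
    | (exit) "p = level_state k 7" "q = level_state (Suc k) 0" "l = []"
proof -
  have "(p, l, q) = (level_state k 0, round_start k 1, level_state k 1) \<or>
      (\<exists>j \<in> {2, 3, 4}. (p, l, q) = (level_state k 6, round_start k j, level_state k j)) \<or>
      (\<exists>j \<in> {1, 2, 3, 4}.
        (p, l, q) = (level_state k j, transfer k @ [(fill_ctr k j, 1)], level_state k j)) \<or>
      (\<exists>j \<in> {1, 2, 3, 4}. (p, l, q) = (level_state k j, [], level_state k 5)) \<or>
      (p, l, q) = (level_state k 5, [(0, 1), (1, -1), (ctr_t k, -1)], level_state k 5) \<or>
      (p, l, q) = (level_state k 5, [], level_state k 6) \<or>
      (p, l, q) = (level_state k 6, [], level_state k 7) \<or>
      (p, l, q) = (level_state k 7, [(0, 1), (ctr_y1 k, -1)], level_state k 7) \<or>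
      (p, l, q) = (level_state k 7, [], level_state (Suc k) 0)"
    using assms
    by (simp only: level_trans_def set_append set_map list.set Un_iff image_iff insert_iff empty_iff
        simp_thms)
  then show ?thesis
    by (elim disjE bexE) (simp_all add: that)
qed

lemma level_trans_pow_trans: "k < n \<Longrightarrow> t \<in> set (level_trans k) \<Longrightarrow> t \<in> set (pow_trans A n)"
  by (auto simp: pow_trans_def)

lemma pow_trans_memI:
  "(0, [(ctr_b 0, 1), (ctr_w 0, int A)], 0) \<in> set (pow_trans A n)"
  "(0, [(0, int A)], level_state 0 0) \<in> set (pow_trans A n)"
  "(level_state n 0, [(1, 1), (ctr_b n, -1)], level_state n 0) \<in> set (pow_trans A n)"
  "(level_state n 0, [(2, 1), (ctr_w n, -1)], level_state n 0) \<in> set (pow_trans A n)"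
  by (simp_all add: pow_trans_def)

lemma pow_transE:
  assumes "(p, l, q) \<in> set (pow_trans A n)"
  obtains (init) "p = 0" "q = 0" "l = [(ctr_b 0, 1), (ctr_w 0, int A)]"
    | (start) "p = 0" "q = level_state 0 0" "l = [(0, int A)]"
    | (collect) "p = level_state n 0" "q = level_state n 0"
        "l = [(1, 1), (ctr_b n, -1)] \<or> l = [(2, 1), (ctr_w n, -1)]"
    | (level) k where "k < n" "(p, l, q) \<in> set (level_trans k)"
  using assms unfolding pow_trans_def by (auto intro: that)

lemma vass_reach_trans: "vass_reach V c c' \<Longrightarrow> vass_reach V c' c'' \<Longrightarrow> vass_reach V c c''"
  unfolding vass_reach_def by (rule rtranclp_trans)

lemma vass_reach_loop:
  assumes loop: "(p, v, p) \<in> trans V" and len: "length u = length v" "nd V \<le> length u"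
    and start: "\<forall>i<nd V. 0 \<le> u ! i" and stop: "\<forall>i<nd V. 0 \<le> u ! i + int m * v ! i"
  shows "vass_reach V (p, u) (p, map2 (\<lambda>x y. x + int m * y) u v)"
  using stop
proof (induction m)
  case 0
  have "map2 (\<lambda>x y. x + int 0 * y) u v = u"
    using len by (auto intro: nth_equalityI)
  then show ?case by (simp add: vass_reach_def)
next
  case (Suc m)
  have "\<forall>i<nd V. 0 \<le> u ! i + int m * v ! i"
  proof (intro allI impI)
    fix i assume "i < nd V"
    then show "0 \<le> u ! i + int m * v ! i"
      using start Suc.prems by (cases "0 \<le> v ! i") (auto simp: algebra_simps)
  qed
  then have "vass_reach V (p, u) (p, map2 (\<lambda>x y. x + int m * y) u v)"
    by (rule Suc.IH)
  moreover have "vass_step V (p, map2 (\<lambda>x y. x + int m * y) u v)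
                             (p, map2 (\<lambda>x y. x + int (Suc m) * y) u v)"
    unfolding vass_step_def
    using loop len Suc.prems by (intro exI[of _ v]) (auto intro!: nth_equalityI simp: algebra_simps)
  ultimately show ?case
    unfolding vass_reach_def by (rule rtranclp.rtrancl_into_rtrancl)
qed

definition vec :: "nat \<Rightarrow> (nat \<Rightarrow> int) \<Rightarrow> int list" where
  "vec n G = map G [0..<dim n]"

lemma map2_map_map: "map2 f (map G xs) (map H xs) = map (\<lambda>i. f (G i) (H i)) xs"
  by (induction xs) auto

lemma vec_plus_sparse:
  "map2 (+) (vec n G) (map (sparse l) [0..<dim n]) = vec n (\<lambda>i. G i + sparse l i)"
  by (simp add: vec_def map2_map_map)

lemma vec_nth [simp]: "i < dim n \<Longrightarrow> vec n G ! i = G i"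
  by (simp add: vec_def)

lemma length_vec [simp]: "length (vec n G) = dim n"
  by (simp add: vec_def)

lemma vec_cong: "(\<And>i. G i = H i) \<Longrightarrow> vec n G = vec n H"
  by (simp add: vec_def)

lemma less_two_iff: "(\<forall>i<(2::nat). P i) \<longleftrightarrow> P 0 \<and> P 1"
  by (auto simp: less_Suc_eq numeral_2_eq_2)

abbreviation pow_reach :: "nat \<Rightarrow> nat \<Rightarrow> nat \<Rightarrow> (nat \<Rightarrow> int) \<Rightarrow> nat \<Rightarrow> (nat \<Rightarrow> int) \<Rightarrow> bool" where
  "pow_reach A n p G q G' \<equiv> vass_reach (pow_vass A n) (p, vec n G) (q, vec n G')"

lemma pow_reach_step:
  assumes "(p, l, q) \<in> set (pow_trans A n)" "\<And>i. G i + sparse l i = G' i" "0 \<le> G' 0" "0 \<le> G' 1"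
  shows "pow_reach A n p G q G'"
proof -
  have "vass_step (pow_vass A n) (p, vec n G) (q, vec n G')"
    unfolding vass_step_def
  proof (intro exI[of _ "map (sparse l) [0..<dim n]"] conjI)
    show "(fst (p, vec n G), map (sparse l) [0..<dim n], fst (q, vec n G')) \<in> trans (pow_vass A n)"
      using assms(1) by (force simp: pow_vass_def vass_trans_of_def)
    show "snd (q, vec n G') = map2 (+) (snd (p, vec n G)) (map (sparse l) [0..<dim n])"
      using assms(2) by (simp add: vec_plus_sparse)
    show "\<forall>i<nd (pow_vass A n). 0 \<le> snd (q, vec n G') ! i"
      using assms(3,4) by (simp add: pow_vass_def less_two_iff dim_def)
  qed simp
  then show ?thesis
    unfolding vass_reach_def by simp
qed

lemma pow_reach_loop:
  assumes "(p, l, p) \<in> set (pow_trans A n)" "\<And>i. G i + int m * sparse l i = G' i"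
    "0 \<le> G 0" "0 \<le> G 1" "0 \<le> G' 0" "0 \<le> G' 1"
  shows "pow_reach A n p G p G'"
proof -
  have "(p, map (sparse l) [0..<dim n], p) \<in> trans (pow_vass A n)"
    using assms(1) by (force simp: pow_vass_def vass_trans_of_def)
  moreover have "map2 (\<lambda>x y. x + int m * y) (vec n G) (map (sparse l) [0..<dim n]) = vec n G'"
    using assms(2) by (simp add: vec_def map2_map_map)
  moreover have "nd (pow_vass A n) = 2" "2 < dim n"
    by (simp_all add: pow_vass_def dim_def)
  ultimately show ?thesis
    using vass_reach_loop[of p "map (sparse l) [0..<dim n]" "pow_vass A n" "vec n G" m] assms(2-6)
    by (simp add: less_two_iff)
qed

lemma pow_vass_stepE:
  assumes "vass_step (pow_vass A n) (p, u) (q, u')"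
  obtains l where "(p, l, q) \<in> set (pow_trans A n)"
    "u' = map2 (+) u (map (sparse l) [0..<dim n])" "0 \<le> u' ! 0" "0 \<le> u' ! 1"
  using assms by (auto simp: vass_step_def pow_vass_def vass_trans_of_def less_two_iff)

definition init_vec :: "nat \<Rightarrow> int \<Rightarrow> nat \<Rightarrow> int" where
  "init_vec A b i = (if i = ctr_b 0 then b else if i = ctr_w 0 then b * int A else 0)"

definition entry_vec :: "nat \<Rightarrow> int \<Rightarrow> int \<Rightarrow> int \<Rightarrow> int \<Rightarrow> nat \<Rightarrow> int" where
  "entry_vec k a b p q i =
     (if i = 0 then a else if i = 1 then p else if i = 2 then q
      else if i = ctr_b k then b - p else if i = ctr_w k then b * a - q else 0)"

(* R j rounds of kind j have been started and F j units filled into fill_ctr k j by them; counter 1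
   holds t, and the squaring loop has added c to counter 0. *)
definition round_vec ::
    "nat \<Rightarrow> int \<Rightarrow> int \<Rightarrow> (nat \<Rightarrow> int) \<Rightarrow> (nat \<Rightarrow> int) \<Rightarrow> int \<Rightarrow> int \<Rightarrow> nat \<Rightarrow> int" where
  "round_vec k a b R F t c i =
     (if i = 0 then a - t + c else if i = 1 then t
      else if i = ctr_b k then b - (R 1 + R 2 + R 3 + R 4)
      else if i = ctr_w k then b * a - (F 1 + F 2 + F 3 + F 4)
      else if i = ctr_y0 k then F 1 - R 2
      else if i = ctr_y1 k then F 2 - R 2 - c
      else if i = ctr_y2 k then F 3 - R 4
      else if i = ctr_t k then t
      else if i = ctr_b (Suc k) then R 3
      else if i = ctr_w (Suc k) then F 4 else 0)"

(* Stated for Suc 0, the simp normal form of 1 :: nat. *)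
lemma entry_vec_counter_0 [simp]: "entry_vec k a b p q 0 = a"
  and entry_vec_counter_1 [simp]: "entry_vec k a b p q (Suc 0) = p"
  by (simp_all add: entry_vec_def)

lemma round_vec_counter_0 [simp]: "round_vec k a b R F t c 0 = a - t + c"
  and round_vec_counter_1 [simp]: "round_vec k a b R F t c (Suc 0) = t"
  by (simp_all add: round_vec_def ctr_defs)

lemma entry_vec_eq_round_vec: "entry_vec k a b 0 0 = round_vec k a b (\<lambda>_. 0) (\<lambda>_. 0) 0 0"
  by (auto simp: entry_vec_def round_vec_def ctr_defs)

lemma init_effect:
  "init_vec A b i + m * sparse [(ctr_b 0, 1), (ctr_w 0, int A)] i = init_vec A (b + m) i"
  by (simp add: init_vec_def ctr_defs algebra_simps)

lemma start_effect: "init_vec A b i + sparse [(0, int A)] i = entry_vec 0 (int A) b 0 0 i"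
  by (simp add: init_vec_def entry_vec_def ctr_defs)

lemma collect_b_effect:
  "entry_vec k a b p q i + m * sparse [(1, 1), (ctr_b k, -1)] i = entry_vec k a b (p + m) q i"
  by (simp add: entry_vec_def ctr_defs algebra_simps)

lemma collect_w_effect:
  "entry_vec k a b p q i + m * sparse [(2, 1), (ctr_w k, -1)] i = entry_vec k a b p (q + m) i"
  by (simp add: entry_vec_def ctr_defs algebra_simps)

lemma round_start_effect:
  "j \<in> {1, 2, 3, 4} \<Longrightarrow>
    round_vec k a b R F t c i + sparse (round_start k j) i =
    round_vec k a b (R(j := R j + 1)) F t c i"
  unfolding round_vec_def round_start_def ctr_defs
  by (elim insertE emptyE) (simp_all add: algebra_simps)

lemma fill_effect:
  "j \<in> {1, 2, 3, 4} \<Longrightarrow>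
    round_vec k a b R F t 0 i + m * sparse (transfer k @ [(fill_ctr k j, 1)]) i =
    round_vec k a b R (F(j := F j + m)) (t + m) 0 i"
  unfolding round_vec_def transfer_def fill_ctr_def ctr_defs
  by (elim insertE emptyE) (simp_all add: algebra_simps)

lemma drain_effect:
  "round_vec k a b R F t c i + m * sparse [(0, 1), (1, -1), (ctr_t k, -1)] i =
   round_vec k a b R F (t - m) c i"
  by (simp add: round_vec_def ctr_defs algebra_simps)

lemma square_effect:
  "round_vec k a b R F t c i + m * sparse [(0, 1), (ctr_y1 k, -1)] i =
   round_vec k a b R F t (c + m) i"
  by (simp add: round_vec_def ctr_defs algebra_simps)

lemma complete_round:
  assumes "k < n" "j \<in> {1, 2, 3, 4}" "0 \<le> a"
  shows "pow_reach A n (level_state k j) (round_vec k a b R F 0 0)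
                       (level_state k 6) (round_vec k a b R (F(j := F j + a)) 0 0)"
proof -
  let ?F = "F(j := F j + a)" and ?round = "\<lambda>F t. round_vec k a b R F t 0"
  note level = level_trans_memI(3,4,5,6)[THEN level_trans_pow_trans[OF assms(1)]]
  have "pow_reach A n (level_state k j) (?round F 0) (level_state k j) (?round ?F a)"
    by (rule pow_reach_loop[OF level(1), where m = "nat a"])
      (use assms fill_effect[of j k a b R F 0 _ a] in simp_all)
  moreover have "pow_reach A n (level_state k j) (?round ?F a) (level_state k 5) (?round ?F a)"
    by (rule pow_reach_step[OF level(2)]) (use assms in simp_all)
  moreover have "pow_reach A n (level_state k 5) (?round ?F a) (level_state k 5) (?round ?F 0)"
    by (rule pow_reach_loop[OF level(3), where m = "nat a"])
      (use assms drain_effect[of k a b R ?F a 0 _ a] in simp_all)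
  moreover have "pow_reach A n (level_state k 5) (?round ?F 0) (level_state k 6) (?round ?F 0)"
    by (rule pow_reach_step[OF level(4)]) (use assms in simp_all)
  ultimately show ?thesis
    by (meson vass_reach_trans)
qed

lemma repeat_rounds:
  assumes "k < n" "j \<in> {2, 3, 4}" "0 \<le> a"
  shows "pow_reach A n (level_state k 6) (round_vec k a b R F 0 0)
           (level_state k 6) (round_vec k a b (R(j := R j + int m)) (F(j := F j + int m * a)) 0 0)"
proof (induction m)
  case 0
  then show ?case by (simp add: vass_reach_def)
next
  case (Suc m)
  let ?R = "R(j := R j + int m)" and ?F = "F(j := F j + int m * a)"
  have "pow_reach A n (level_state k 6) (round_vec k a b ?R ?F 0 0)
          (level_state k j) (round_vec k a b (?R(j := ?R j + 1)) ?F 0 0)"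
    by (rule pow_reach_step[OF level_trans_pow_trans[OF assms(1) level_trans_memI(2)]])
      (use assms round_start_effect[of j] in simp_all)
  moreover have "pow_reach A n (level_state k j) (round_vec k a b (?R(j := ?R j + 1)) ?F 0 0)
          (level_state k 6) (round_vec k a b (?R(j := ?R j + 1)) (?F(j := ?F j + a)) 0 0)"
    using complete_round[OF assms(1) _ assms(3)] assms(2) by blast
  ultimately have "pow_reach A n (level_state k 6) (round_vec k a b R F 0 0)
          (level_state k 6) (round_vec k a b (?R(j := ?R j + 1)) (?F(j := ?F j + a)) 0 0)"
    using Suc.IH by (meson vass_reach_trans)
  also have "?R(j := ?R j + 1) = R(j := R j + int (Suc m))"
    by (simp add: algebra_simps)
  also have "?F(j := ?F j + a) = F(j := F j + int (Suc m) * a)"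
    by (simp add: algebra_simps)
  finally show ?case .
qed

lemma power_two_power_Suc: "(x :: 'a :: monoid_mult) ^ 2 ^ Suc k = x ^ 2 ^ k * x ^ 2 ^ k"
  by (simp add: mult_2 power_add)

lemma level_run:
  assumes "k < n" "0 \<le> a" "0 \<le> b"
  shows "pow_reach A n (level_state k 0) (entry_vec k a ((1 + a) * (1 + b)) 0 0)
                       (level_state (Suc k) 0) (entry_vec (Suc k) (a * a) b 0 0)"
proof -
  let ?B = "(1 + a) * (1 + b)"
  let ?R1 = "(\<lambda>_. 0)(1 := 1)" and ?F1 = "(\<lambda>_. 0)(1 := a)"
  let ?R2 = "?R1(2 := a)" and ?F2 = "?F1(2 := a * a)"
  let ?R3 = "?R2(3 := b)" and ?F3 = "?F2(3 := b * a)"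
  let ?R4 = "?R3(4 := b * a)" and ?F4 = "?F3(4 := b * a * a)"
  let ?round = "\<lambda>R F c. round_vec k a ?B R F 0 c"
  note level = level_trans_memI[THEN level_trans_pow_trans[OF assms(1)]]
  have "pow_reach A n (level_state k 0) (entry_vec k a ?B 0 0)
                     (level_state k 1) (?round ?R1 (\<lambda>_. 0) 0)"
    by (rule pow_reach_step[OF level(1)])
      (use assms round_start_effect[of 1] in \<open>simp_all add: entry_vec_eq_round_vec\<close>)
  moreover have "pow_reach A n (level_state k 1) (?round ?R1 (\<lambda>_. 0) 0)
                              (level_state k 6) (?round ?R1 ?F1 0)"
    using complete_round[OF assms(1) _ assms(2), where j = 1 and F = "\<lambda>_. 0"] by simp
  moreover have "pow_reach A n (level_state k 6) (?round ?R1 ?F1 0)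
                              (level_state k 6) (?round ?R2 ?F2 0)"
    using repeat_rounds[OF assms(1) _ assms(2), where j = 2 and R = ?R1 and F = ?F1 and m = "nat a"]
      assms by simp
  moreover have "pow_reach A n (level_state k 6) (?round ?R2 ?F2 0)
                              (level_state k 6) (?round ?R3 ?F3 0)"
    using repeat_rounds[OF assms(1) _ assms(2), where j = 3 and R = ?R2 and F = ?F2 and m = "nat b"]
      assms by simp
  moreover have "pow_reach A n (level_state k 6) (?round ?R3 ?F3 0)
                              (level_state k 6) (?round ?R4 ?F4 0)"
    using repeat_rounds[OF assms(1) _ assms(2), where j = 4 and R = ?R3 and F = ?F3
        and m = "nat (b * a)"] assms by simp
  moreover have "pow_reach A n (level_state k 6) (?round ?R4 ?F4 0)
                              (level_state k 7) (?round ?R4 ?F4 0)"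
    by (rule pow_reach_step[OF level(7)]) (use assms in simp_all)
  moreover have "0 \<le> a * a - a"
    using assms(2) by (cases "a = 0") (auto dest: mult_left_mono[of 1 a a])
  then have "pow_reach A n (level_state k 7) (?round ?R4 ?F4 0)
                           (level_state k 7) (?round ?R4 ?F4 (a * a - a))"
    by (intro pow_reach_loop[OF level(8), where m = "nat (a * a - a)"])
      (use assms square_effect in simp_all)
  moreover have "pow_reach A n (level_state k 7) (?round ?R4 ?F4 (a * a - a))
      (level_state (Suc k) 0) (entry_vec (Suc k) (a * a) b 0 0)"
    by (rule pow_reach_step[OF level(9)])
      (auto simp: round_vec_def entry_vec_def ctr_defs algebra_simps)
  ultimately show ?thesis
    by (meson vass_reach_trans)
qed

lemma reach_level:
  assumes "k \<le> n" "0 \<le> b"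
  shows "pow_reach A n 0 (\<lambda>_. 0) (level_state k 0) (entry_vec k (int A ^ 2 ^ k) b 0 0)"
  using assms
proof (induction k arbitrary: b)
  case 0
  have "pow_reach A n 0 (\<lambda>_. 0) 0 (init_vec A b)"
    by (rule pow_reach_loop[OF pow_trans_memI(1), where m = "nat b"])
      (use 0 init_effect[of A 0 _ b] in \<open>simp_all add: init_vec_def ctr_defs\<close>)
  moreover have "pow_reach A n 0 (init_vec A b) (level_state 0 0) (entry_vec 0 (int A) b 0 0)"
    by (rule pow_reach_step[OF pow_trans_memI(2) start_effect]) simp_all
  ultimately show ?case
    by (simp add: vass_reach_trans)
next
  case (Suc k)
  let ?a = "int A ^ 2 ^ k"
  have "pow_reach A n 0 (\<lambda>_. 0) (level_state k 0) (entry_vec k ?a ((1 + ?a) * (1 + b)) 0 0)"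
    using Suc by simp
  moreover have "pow_reach A n (level_state k 0) (entry_vec k ?a ((1 + ?a) * (1 + b)) 0 0)
                   (level_state (Suc k) 0) (entry_vec (Suc k) (?a * ?a) b 0 0)"
    using Suc by (intro level_run) simp_all
  ultimately have "pow_reach A n 0 (\<lambda>_. 0)
                     (level_state (Suc k) 0) (entry_vec (Suc k) (?a * ?a) b 0 0)"
    by (meson vass_reach_trans)
  then show ?case
    by (simp only: power_two_power_Suc)
qed

lemma reach_output:
  "vass_reach (pow_vass A n) (0, replicate (dim n) 0)
     (level_state n 0, [int (A ^ 2 ^ n), int B, int (B * A ^ 2 ^ n)] @ replicate (dim n - 3) 0)"
proof -
  let ?a = "int A ^ 2 ^ n"
  have "pow_reach A n 0 (\<lambda>_. 0) (level_state n 0) (entry_vec n ?a (int B) 0 0)"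
    by (rule reach_level) simp_all
  moreover have "pow_reach A n (level_state n 0) (entry_vec n ?a (int B) 0 0)
                              (level_state n 0) (entry_vec n ?a (int B) (int B) 0)"
    by (rule pow_reach_loop[OF pow_trans_memI(3), where m = B])
      (use collect_b_effect[of n ?a "int B" 0 0 _ "int B"] in simp_all)
  moreover have "pow_reach A n (level_state n 0) (entry_vec n ?a (int B) (int B) 0)
                   (level_state n 0) (entry_vec n ?a (int B) (int B) (int B * ?a))"
    by (rule pow_reach_loop[OF pow_trans_memI(4), where m = "B * A ^ 2 ^ n"])
      (use collect_w_effect[of n ?a "int B" "int B" 0 _ "int (B * A ^ 2 ^ n)"] in simp_all)
  ultimately have "pow_reach A n 0 (\<lambda>_. 0)
                     (level_state n 0) (entry_vec n ?a (int B) (int B) (int B * ?a))"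
    by (meson vass_reach_trans)
  also have "vec n (\<lambda>_. 0) = replicate (dim n) 0"
    by (simp add: vec_def map_replicate_const)
  also have "vec n (entry_vec n ?a (int B) (int B) (int B * ?a)) =
      [int (A ^ 2 ^ n), int B, int (B * A ^ 2 ^ n)] @ replicate (dim n - 3) 0"
    by (rule nth_equalityI)
      (auto simp: dim_def nth_append nth_Cons' entry_vec_def ctr_defs mult.commute)
  finally show ?thesis .
qed

(* In state j the round in progress can still fill a - t units, as counter 0 holds a - t. *)
definition round_bounds :: "nat \<Rightarrow> int \<Rightarrow> (nat \<Rightarrow> int) \<Rightarrow> (nat \<Rightarrow> int) \<Rightarrow> int \<Rightarrow> int \<Rightarrow> bool" where
  "round_bounds j a R F t c \<longleftrightarrow> 0 \<le> t \<and> (j \<noteq> 7 \<longrightarrow> c = 0) \<and> R 1 = 1 \<and>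
     (\<forall>i \<in> {1, 2, 3, 4}. F i + (if i = j then a - t else 0) \<le> a * R i)"

lemma round_bounds_step:
  assumes bounds: "round_bounds j a R F t c"
    and trans: "(level_state k j, l, level_state k j') \<in> set (level_trans k)" "0 < j" "j' < 8"
    and nonneg: "0 \<le> round_vec k a b R F t c 0 + sparse l 0"
      "0 \<le> round_vec k a b R F t c 1 + sparse l 1"
  shows "\<exists>R' F' t' c'. round_bounds j' a R' F' t' c' \<and>
           (\<forall>i. round_vec k a b R F t c i + sparse l i = round_vec k a b R' F' t' c' i)"
  using trans(1)
proof (cases rule: level_transE)
  case (round j'')
  then have "j = 6" "j' \<in> {2, 3, 4}" "l = round_start k j'"
    by (simp_all add: level_state_eq_iff)
  then have "round_bounds j' a (R(j' := R j' + 1)) F t c"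
    using bounds by (auto simp: round_bounds_def algebra_simps)
  then show ?thesis
    using round_start_effect[of j' k a b R F t c] \<open>j' \<in> {2, 3, 4}\<close> \<open>l = round_start k j'\<close> by blast
next
  case (fill j'')
  then have "j' = j" "j \<in> {1, 2, 3, 4}" "l = transfer k @ [(fill_ctr k j, 1)]" "c = 0"
    using bounds by (auto simp: level_state_eq_iff round_bounds_def)
  then have "round_bounds j' a R (F(j := F j + 1)) (t + 1) c"
    using bounds by (auto simp: round_bounds_def)
  then show ?thesis
    using fill_effect[of j k a b R F t _ 1] \<open>j \<in> {1, 2, 3, 4}\<close> \<open>c = 0\<close>
      \<open>l = transfer k @ [(fill_ctr k j, 1)]\<close> by auto
next
  case (fill_done j'')
  then have "j \<in> {1, 2, 3, 4}" "j' = 5" "c = 0"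
    using bounds by (auto simp: level_state_eq_iff round_bounds_def)
  then have "round_bounds j' a R F t c"
    using bounds nonneg(1) fill_done by (auto simp: round_bounds_def)
  then show ?thesis
    using fill_done by auto
next
  case drain
  then have "j = 5" "j' = 5"
    by (simp_all add: level_state_eq_iff)
  then have "round_bounds j' a R F (t - 1) c"
    using bounds nonneg(2) drain by (auto simp: round_bounds_def ctr_t_def)
  then show ?thesis
    using drain_effect[of k a b R F t c _ 1] drain by auto
next
  case square
  then have "j = 7" "j' = 7"
    by (simp_all add: level_state_eq_iff)
  then have "round_bounds j' a R F t (c + 1)"
    using bounds by (auto simp: round_bounds_def)
  then show ?thesis
    using square_effect[of k a b R F t c _ 1] square by auto
qed (use bounds trans in \<open>auto simp: level_state_eq_iff round_bounds_def\<close>)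

lemma round_vec_exit:
  assumes bounds: "round_bounds 7 a R F t c"
    and zero: "\<forall>i \<in> {ctr_b k, ctr_w k, ctr_y0 k, ctr_y1 k, ctr_y2 k, ctr_t k}.
                 round_vec k a b R F t c i = 0"
  shows "round_vec k a b R F t c = entry_vec (Suc k) (a * a) (R 3) 0 0"
proof -
  have sums: "b = R 1 + R 2 + R 3 + R 4" "b * a = F 1 + F 2 + F 3 + F 4"
    and checks: "F 1 = R 2" "F 2 = R 2 + c" "F 3 = R 4" "t = 0"
    using zero[rule_format, of "ctr_b k"] zero[rule_format, of "ctr_w k"]
      zero[rule_format, of "ctr_y0 k"] zero[rule_format, of "ctr_y1 k"]
      zero[rule_format, of "ctr_y2 k"] zero[rule_format, of "ctr_t k"]
    by (simp_all add: round_vec_def ctr_defs)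
  have "R 1 = 1" "F 1 \<le> a" "F 2 \<le> a * R 2" "F 3 \<le> a * R 3" "F 4 \<le> a * R 4"
    using bounds by (auto simp: round_bounds_def)
  moreover from this(1) have "F 1 + F 2 + F 3 + F 4 = a + a * R 2 + a * R 3 + a * R 4"
    using sums by (simp add: algebra_simps)
  ultimately have tight: "F 1 = a" "F 2 = a * R 2" "F 3 = a * R 3" "F 4 = a * R 4"
    by linarith+
  have "R 2 = a"
    using tight(1) checks(1) by simp
  moreover from this have "c = a * a - a"
    using tight(2) checks(2) by simp
  moreover have "R 4 = a * R 3"
    using tight(3) checks(3) by simp
  moreover from this have "F 4 = a * a * R 3"
    using tight(4) by simp
  ultimately show ?thesis
    using sums checks tight by (auto simp: round_vec_def entry_vec_def ctr_defs algebra_simps)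
qed

definition entry_inv :: "nat \<Rightarrow> nat \<Rightarrow> int \<Rightarrow> int list \<Rightarrow> bool" where
  "entry_inv n k a u \<longleftrightarrow>
     (\<exists>b p q. 0 \<le> p \<and> 0 \<le> q \<and> (k < n \<longrightarrow> p = 0 \<and> q = 0) \<and> u = vec n (entry_vec k a b p q))"

definition round_inv :: "nat \<Rightarrow> nat \<Rightarrow> int \<Rightarrow> nat \<Rightarrow> int list \<Rightarrow> bool" where
  "round_inv n k a j u \<longleftrightarrow>
     (\<exists>b R F t c. round_bounds j a R F t c \<and> u = vec n (round_vec k a b R F t c))"

lemma round_inv_entry:
  assumes "entry_inv n k a u" "k < n" "u' = map2 (+) u (map (sparse (round_start k 1)) [0..<dim n])"
  shows "round_inv n k a 1 u'"
proof -
  obtain b where "u = vec n (entry_vec k a b 0 0)"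
    using assms(1,2) unfolding entry_inv_def by blast
  then have "u' = vec n (round_vec k a b ((\<lambda>_. 0)(1 := 1)) (\<lambda>_. 0) 0 0)"
    using assms(3) round_start_effect[of 1 k a b "\<lambda>_. 0" "\<lambda>_. 0" 0 0]
    by (simp add: vec_plus_sparse entry_vec_eq_round_vec)
  moreover have "round_bounds 1 a ((\<lambda>_. 0)(1 := 1)) (\<lambda>_. 0) 0 0"
    by (simp add: round_bounds_def)
  ultimately show ?thesis
    unfolding round_inv_def by blast
qed

lemma round_inv_step:
  assumes "round_inv n k a j u" "(level_state k j, l, level_state k j') \<in> set (level_trans k)"
    "0 < j" "j' < 8"
    "u' = map2 (+) u (map (sparse l) [0..<dim n])" "0 \<le> u' ! 0" "0 \<le> u' ! 1"
  shows "round_inv n k a j' u'"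
proof -
  obtain b R F t c where bounds: "round_bounds j a R F t c" and u: "u = vec n (round_vec k a b R F t c)"
    using assms(1) unfolding round_inv_def by blast
  have u': "u' = vec n (\<lambda>i. round_vec k a b R F t c i + sparse l i)"
    using assms(5) u by (simp add: vec_plus_sparse)
  then have "0 \<le> round_vec k a b R F t c 0 + sparse l 0" "0 \<le> round_vec k a b R F t c 1 + sparse l 1"
    using assms(6,7) by (simp_all add: dim_def)
  then obtain R' F' t' c' where "round_bounds j' a R' F' t' c'"
    and effect: "\<And>i. round_vec k a b R F t c i + sparse l i = round_vec k a b R' F' t' c' i"
    using round_bounds_step[OF bounds assms(2-4)] by blast
  moreover have "u' = vec n (round_vec k a b R' F' t' c')"
    unfolding u' by (rule vec_cong) (rule effect)
  ultimately show ?thesis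
    unfolding round_inv_def by blast
qed

definition lower_zero :: "nat \<Rightarrow> int list \<Rightarrow> bool" where
  "lower_zero k u \<longleftrightarrow> (\<forall>i. 3 \<le> i \<and> i < ctr_b k \<longrightarrow> u ! i = 0)"

lemma entry_inv_exit:
  assumes "round_inv n k a 7 u" "lower_zero (Suc k) u" "Suc k \<le> n"
  shows "entry_inv n (Suc k) (a * a) u"
proof -
  obtain b R F t c where bounds: "round_bounds 7 a R F t c" and u: "u = vec n (round_vec k a b R F t c)"
    using assms(1) unfolding round_inv_def by blast
  have "\<forall>i \<in> {ctr_b k, ctr_w k, ctr_y0 k, ctr_y1 k, ctr_y2 k, ctr_t k}. round_vec k a b R F t c i = 0"
  proof
    fix i assume "i \<in> {ctr_b k, ctr_w k, ctr_y0 k, ctr_y1 k, ctr_y2 k, ctr_t k}"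
    then have "3 \<le> i" "i < ctr_b (Suc k)" "i < dim n"
      using assms(3) by (auto simp: ctr_defs dim_def)
    then have "u ! i = 0"
      using assms(2) unfolding lower_zero_def by blast
    with u \<open>i < dim n\<close> show "round_vec k a b R F t c i = 0"
      by simp
  qed
  then have "u = vec n (entry_vec (Suc k) (a * a) (R 3) 0 0)"
    using round_vec_exit[OF bounds] u by simp
  then show ?thesis
    unfolding entry_inv_def by auto
qed

lemma entry_inv_collect:
  assumes "entry_inv n n a u" "l = [(1, 1), (ctr_b n, -1)] \<or> l = [(2, 1), (ctr_w n, -1)]"
    "u' = map2 (+) u (map (sparse l) [0..<dim n])"
  shows "entry_inv n n a u'"
proof -
  obtain b p q where pq: "0 \<le> p" "0 \<le> q" and u: "u = vec n (entry_vec n a b p q)"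
    using assms(1) unfolding entry_inv_def by blast
  from assms(2) have "u' = vec n (entry_vec n a b (p + 1) q) \<or> u' = vec n (entry_vec n a b p (q + 1))"
    using assms(3) u collect_b_effect[of n a b p q _ 1] collect_w_effect[of n a b p q _ 1]
    by (auto simp: vec_plus_sparse)
  moreover have "0 \<le> p + 1" "0 \<le> q + 1"
    using pq by simp_all
  ultimately show ?thesis
    using pq unfolding entry_inv_def by blast
qed

definition level_inv :: "nat \<Rightarrow> nat \<Rightarrow> nat \<Rightarrow> nat \<Rightarrow> int list \<Rightarrow> bool" where
  "level_inv A n k j u \<longleftrightarrow>
     (if j = 0 then entry_inv n k (int A ^ 2 ^ k) u else round_inv n k (int A ^ 2 ^ k) j u)"

(* Counters of lower levels are never touched again, and they are zero at the end of an
   accepting run: so it suffices to know the counters of level k when those below are zero. *)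
definition run_inv :: "nat \<Rightarrow> nat \<Rightarrow> nat \<Rightarrow> int list \<Rightarrow> bool" where
  "run_inv A n p u \<longleftrightarrow> length u = dim n \<and> (p = 0 \<longrightarrow> (\<exists>b. u = vec n (init_vec A b))) \<and>
     (\<forall>k j. j < 8 \<longrightarrow> (k < n \<or> k = n \<and> j = 0) \<longrightarrow> p = level_state k j \<longrightarrow> lower_zero k u \<longrightarrow>
        level_inv A n k j u)"

lemma run_inv_level_stateI:
  assumes "length u = dim n" "j < 8" "k < n \<or> k = n \<and> j = 0" "lower_zero k u \<Longrightarrow> level_inv A n k j u"
  shows "run_inv A n (level_state k j) u"
proof -
  have "k' = k \<and> j' = j" if "level_state k j = level_state k' j'" "j' < 8" for k' j'
    using that assms(2) unfolding level_state_def by presburger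
  then show ?thesis
    using assms unfolding run_inv_def by (auto simp: level_state_def)
qed

lemma run_inv_level_stateD:
  "run_inv A n (level_state k j) u \<Longrightarrow> j < 8 \<Longrightarrow> k < n \<or> k = n \<and> j = 0 \<Longrightarrow> lower_zero k u \<Longrightarrow>
    level_inv A n k j u"
  unfolding run_inv_def by blast

lemma lower_zero_pullback:
  assumes "lower_zero k u'" "u' = map2 (+) u (map (sparse l) [0..<dim n])"
    "length u = dim n" "k \<le> n"
    "\<forall>i. 3 \<le> i \<and> i < ctr_b k \<longrightarrow> sparse l i = 0"
  shows "lower_zero k u"
  unfolding lower_zero_def
proof (intro allI impI)
  fix i assume i: "3 \<le> i \<and> i < ctr_b k"
  then have "u' ! i = u ! i + sparse l i"
    using assms(2-4) by (simp add: ctr_b_def dim_def)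
  then show "u ! i = 0"
    using assms(1,5) i by (simp add: lower_zero_def)
qed

lemma run_inv_lift:
  assumes inv: "run_inv A n (level_state k j) u"
    and "j < 8" "j' < 8" "k < n \<or> k = n \<and> j = 0 \<and> j' = 0"
    and u': "u' = map2 (+) u (map (sparse l) [0..<dim n])"
    and "\<forall>i. 3 \<le> i \<and> i < ctr_b k \<longrightarrow> sparse l i = 0"
    and "level_inv A n k j u \<Longrightarrow> level_inv A n k j' u'"
  shows "run_inv A n (level_state k j') u'"
proof (rule run_inv_level_stateI)
  have "length u = dim n"
    using inv by (simp add: run_inv_def)
  then show "length u' = dim n"
    using u' by simp
  show "j' < 8" "k < n \<or> k = n \<and> j' = 0"
    using assms(3,4) by auto
  assume "lower_zero k u'"
  then have "lower_zero k u"
    using lower_zero_pullback \<open>length u = dim n\<close> assms(4-6) by auto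
  then show "level_inv A n k j' u'"
    using run_inv_level_stateD[OF inv] assms(2,4,7) by auto
qed

lemma level_trans_lower_zero:
  "(p, l, q) \<in> set (level_trans k) \<Longrightarrow> 3 \<le> i \<Longrightarrow> i < ctr_b k \<Longrightarrow> sparse l i = 0"
  by (erule level_transE) (auto simp: round_start_def transfer_def fill_ctr_def ctr_defs)

lemma run_inv_level_exit:
  assumes inv: "run_inv A n (level_state k 7) u" and "k < n"
  shows "run_inv A n (level_state (Suc k) 0) u"
proof (rule run_inv_level_stateI)
  let ?a = "int A ^ 2 ^ k"
  assume "lower_zero (Suc k) u"
  moreover from this have "lower_zero k u"
    by (simp add: lower_zero_def ctr_b_def)
  then have "round_inv n k ?a 7 u"
    using run_inv_level_stateD[OF inv] \<open>k < n\<close> by (simp add: level_inv_def)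
  ultimately have "entry_inv n (Suc k) (?a * ?a) u"
    using entry_inv_exit \<open>k < n\<close> by simp
  then show "level_inv A n (Suc k) 0 u"
    by (simp add: level_inv_def flip: power_two_power_Suc)
qed (use inv \<open>k < n\<close> in \<open>auto simp: run_inv_def\<close>)

lemma run_inv_level_step:
  assumes inv: "run_inv A n p u" and "k < n" and trans: "(p, l, q) \<in> set (level_trans k)"
    and u': "u' = map2 (+) u (map (sparse l) [0..<dim n])" and "0 \<le> u' ! 0" "0 \<le> u' ! 1"
  shows "run_inv A n q u'"
proof -
  have low: "\<forall>i. 3 \<le> i \<and> i < ctr_b k \<longrightarrow> sparse l i = 0"
    using level_trans_lower_zero[OF trans] by blast
  consider (entry) "p = level_state k 0" "q = level_state k 1" "l = round_start k 1"
    | (exit) "p = level_state k 7" "q = level_state (Suc k) 0" "l = []"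
    | (inner) j j' where "p = level_state k j" "q = level_state k j'" "0 < j" "j < 8" "0 < j'" "j' < 8"
    using trans by (cases rule: level_transE) (auto simp: level_state_eq_iff)
  then show ?thesis
  proof cases
    case entry
    have "run_inv A n (level_state k 1) u'"
    proof (rule run_inv_lift[OF inv[unfolded entry(1)] _ _ _ u' low])
      show "level_inv A n k 0 u \<Longrightarrow> level_inv A n k 1 u'"
        using round_inv_entry \<open>k < n\<close> u' entry(3) by (simp add: level_inv_def)
    qed (use \<open>k < n\<close> in auto)
    with entry(2) show ?thesis
      by simp
  next
    case exit
    have "length u = dim n"
      using inv by (simp add: run_inv_def)
    then have "u' = u"
      using u' exit(3) by (auto intro: nth_equalityI)
    with exit inv \<open>k < n\<close> show ?thesis
      by (simp add: run_inv_level_exit)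
  next
    case inner
    have "run_inv A n (level_state k j') u'"
    proof (rule run_inv_lift[OF inv[unfolded inner(1)] inner(4,6) _ u' low])
      show "level_inv A n k j u \<Longrightarrow> level_inv A n k j' u'"
        using round_inv_step[of n k _ j u l j' u'] trans inner assms(4-6) by (simp add: level_inv_def)
    qed (use \<open>k < n\<close> in auto)
    with inner(2) show ?thesis
      by simp
  qed
qed

lemma run_inv_step:
  assumes inv: "run_inv A n p u" and "vass_step (pow_vass A n) (p, u) (q, u')"
  shows "run_inv A n q u'"
proof -
  obtain l where trans: "(p, l, q) \<in> set (pow_trans A n)"
    and u': "u' = map2 (+) u (map (sparse l) [0..<dim n])" and nonneg: "0 \<le> u' ! 0" "0 \<le> u' ! 1"
    using assms(2) by (rule pow_vass_stepE)
  from trans show ?thesis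
  proof (cases rule: pow_transE)
    case init
    then obtain b where "u = vec n (init_vec A b)"
      using inv by (auto simp: run_inv_def)
    then have "u' = vec n (init_vec A (b + 1))"
      using u' init init_effect[of A b _ 1] by (simp add: vec_plus_sparse)
    then show ?thesis
      using init by (auto simp: run_inv_def level_state_def)
  next
    case start
    then obtain b where "u = vec n (init_vec A b)"
      using inv by (auto simp: run_inv_def)
    then have "u' = vec n (entry_vec 0 (int A) b 0 0)"
      using u' start start_effect by (simp add: vec_plus_sparse)
    then show ?thesis
      unfolding start(2) by (intro run_inv_level_stateI) (auto simp: level_inv_def entry_inv_def)
  next
    case collect
    have "run_inv A n (level_state n 0) u'"
    proof (rule run_inv_lift[OF inv[unfolded collect(1)] _ _ _ u'])
      show "level_inv A n n 0 u \<Longrightarrow> level_inv A n n 0 u'"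
        using entry_inv_collect[OF _ collect(3) u'] by (simp add: level_inv_def)
    qed (use collect(3) in \<open>auto simp: ctr_defs\<close>)
    with collect(2) show ?thesis
      by simp
  next
    case level
    with inv u' nonneg show ?thesis
      by (blast intro: run_inv_level_step)
  qed
qed

lemma reach_run_inv:
  assumes "vass_reach (pow_vass A n) (0, replicate (dim n) 0) (q, u)"
  shows "run_inv A n q u"
  using assms unfolding vass_reach_def
proof (induction rule: rtranclp_induct2)
  case refl
  have "init_vec A 0 = (\<lambda>_. 0)"
    by (auto simp: init_vec_def)
  then have "replicate (dim n) 0 = vec n (init_vec A 0)"
    by (simp add: vec_def map_replicate_const)
  then show ?case
    by (auto simp: run_inv_def level_state_def)
next
  case (step q u q' u')
  then show ?case
    by (blast intro: run_inv_step)
qed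

lemma reach_output_sound:
  assumes "length v = 3"
    and "vass_reach (pow_vass A n) (0, replicate (dim n) 0)
           (level_state n 0, v @ replicate (dim n - 3) 0)"
  shows "\<exists>B. v = [int (A ^ 2 ^ n), int B, int (B * A ^ 2 ^ n)]"
proof -
  let ?u = "v @ replicate (dim n - 3) 0"
  have "lower_zero n ?u"
    using assms(1) by (auto simp: lower_zero_def nth_append ctr_b_def dim_def)
  then have "entry_inv n n (int A ^ 2 ^ n) ?u"
    using run_inv_level_stateD[OF reach_run_inv[OF assms(2)]] by (simp add: level_inv_def)
  then obtain b p q where "0 \<le> p" and u: "?u = vec n (entry_vec n (int A ^ 2 ^ n) b p q)"
    unfolding entry_inv_def by blast
  have at: "?u ! i = entry_vec n (int A ^ 2 ^ n) b p q i" if "i < dim n" for i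
    using that u by simp
  obtain x y z where v: "v = [x, y, z]"
    using assms(1) by (auto simp: numeral_3_eq_3 length_Suc_conv)
  have "x = int A ^ 2 ^ n" "y = p" "z = q" "b = p" "q = b * int A ^ 2 ^ n"
    using at[of 0] at[of 1] at[of 2] at[of "ctr_b n"] at[of "ctr_w n"] v
    by (simp_all add: entry_vec_def nth_append dim_def ctr_defs)
  with v \<open>0 \<le> p\<close> have "v = [int (A ^ 2 ^ n), int (nat p), int (nat p * A ^ 2 ^ n)]"
    by simp
  then show ?thesis
    by blast
qed

definition sparse_norm :: "(nat \<times> int) list \<Rightarrow> nat" where
  "sparse_norm l = sum_list (map (\<lambda>(j, c). nat \<bar>c\<bar>) l)"

lemma norm_sparse_le: "sum_list (map (\<lambda>x. nat \<bar>x\<bar>) (map (sparse l) [0..<d])) \<le> sparse_norm l"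
proof (induction l)
  case Nil
  then show ?case by (simp add: sparse_norm_def)
next
  case (Cons jc l)
  obtain j c where jc: "jc = (j, c)" by fastforce
  have "sum_list (map (\<lambda>x. nat \<bar>x\<bar>) (map (sparse (jc # l)) [0..<d]))
      = (\<Sum>i\<in>{0..<d}. nat \<bar>(if j = i then c else 0) + sparse l i\<bar>)"
    by (simp add: jc interv_sum_list_conv_sum_set_nat)
  also have "\<dots> \<le> (\<Sum>i\<in>{0..<d}. (if j = i then nat \<bar>c\<bar> else 0) + nat \<bar>sparse l i\<bar>)"
    by (rule sum_mono) auto
  also have "\<dots> \<le> nat \<bar>c\<bar> + sum_list (map (\<lambda>x. nat \<bar>x\<bar>) (map (sparse l) [0..<d]))"
    by (simp add: sum.distrib interv_sum_list_conv_sum_set_nat)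
  also have "\<dots> \<le> sparse_norm (jc # l)"
    using Cons.IH by (simp add: jc sparse_norm_def)
  finally show ?case .
qed

lemma sum_set_le_sum_list: "sum (f :: 'a \<Rightarrow> nat) (set xs) \<le> sum_list (map f xs)"
proof (induction xs)
  case (Cons x xs)
  have "sum f (set (x # xs)) \<le> f x + sum f (set xs)"
    by (simp add: sum.insert_if)
  with Cons.IH show ?case
    by simp
qed simp

lemma sum_list_map_concat:
  "sum_list (map f (concat xss)) = sum_list (map (\<lambda>xs. sum_list (map f xs)) xss)"
  by (induction xss) auto

lemma sparse_norm_level_trans: "sum_list (map (\<lambda>t. sparse_norm (fst (snd t))) (level_trans k)) = 33"
  by (simp add: level_trans_def round_start_def transfer_def sparse_norm_def)

lemma vass_size_pow_vass: "vass_size (pow_vass A n) \<le> (2 * A + 48) * (n + 1)"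
proof -
  let ?norm = "\<lambda>t. sum_list (map (\<lambda>x. nat \<bar>x\<bar>) (fst (snd t)))"
  have "(\<Sum>t\<in>trans (pow_vass A n). ?norm t) \<le>
      (\<Sum>t\<in>set (pow_trans A n). ?norm (vass_trans_of (dim n) t))"
    using sum_image_le[of "set (pow_trans A n)" ?norm "vass_trans_of (dim n)"]
    by (simp add: pow_vass_def comp_def)
  also have "\<dots> \<le> (\<Sum>t\<in>set (pow_trans A n). sparse_norm (fst (snd t)))"
    by (rule sum_mono) (auto simp: vass_trans_of_def norm_sparse_le simp del: map_map)
  also have "\<dots> \<le> sum_list (map (\<lambda>t. sparse_norm (fst (snd t))) (pow_trans A n))"
    by (rule sum_set_le_sum_list)
  also have "\<dots> = 2 * A + 5 + 33 * n"
    by (simp add: pow_trans_def sum_list_map_concat comp_def sparse_norm_level_trans sum_list_triv)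
      (simp add: sparse_norm_def)
  finally show ?thesis
    by (simp add: vass_size_def pow_vass_def algebra_simps)
qed

lemma wf_pow_vass: "wf_vass (pow_vass A n)"
proof -
  have "p < 8 * n + 2 \<and> q < 8 * n + 2" if "(p, l, q) \<in> set (pow_trans A n)" for p l q
    using that by (cases rule: pow_transE) (auto elim!: level_transE simp: level_state_def)
  then show ?thesis
    unfolding wf_vass_def by (auto simp: pow_vass_def vass_trans_of_def dim_def)
qed

lemma pow_vass_computes:
  "vass_computes (pow_vass A n) 3 {[int (A ^ 2 ^ n), int B, int (B * A ^ 2 ^ n)] | B. True}"
proof -
  have "nd (pow_vass A n) + nz (pow_vass A n) = dim n"
    by (simp add: pow_vass_def dim_def)
  moreover have "0 \<in> states (pow_vass A n)" "level_state n 0 \<in> states (pow_vass A n)"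
    by (simp_all add: pow_vass_def level_state_def)
  moreover have "{[int (A ^ 2 ^ n), int B, int (B * A ^ 2 ^ n)] | B. True} =
      {v. length v = 3 \<and> vass_reach (pow_vass A n) (0, replicate (dim n) 0)
                             (level_state n 0, v @ replicate (dim n - 3) 0)}"
    using reach_output reach_output_sound by fastforce
  ultimately show ?thesis
    unfolding vass_computes_def by (auto simp: dim_def)
qed

theorem lemma12:
  fixes A :: nat
  shows "\<exists>V :: nat \<Rightarrow> vass. \<exists>c e :: nat.
           (\<forall>n. wf_vass (V n) \<and> nd (V n) = 2 \<and>
                vass_size (V n) \<le> c * (n + 1) ^ e \<and>
                vass_computes (V n) 3
                  {[int (A ^ (2 ^ n)), int B, int (B * A ^ (2 ^ n))] | B. True})"
proof (intro exI allI conjI)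
  fix n
  show "wf_vass (pow_vass A n)"
    by (rule wf_pow_vass)
  show "nd (pow_vass A n) = 2"
    by (simp add: pow_vass_def)
  show "vass_size (pow_vass A n) \<le> (2 * A + 48) * (n + 1) ^ 1"
    using vass_size_pow_vass by simp
  show "vass_computes (pow_vass A n) 3 {[int (A ^ 2 ^ n), int B, int (B * A ^ 2 ^ n)] | B. True}"
    by (rule pow_vass_computes)
qed

end
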